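(* Let $N\ge 2$ and $d\ge 1$ be integers and let $f:\mathbb{Z}_N^d\to\mathbb{C}$ be a nonzero function with support $E=\mathrm{supp}(f)$ and Fourier support $\Sigma=\mathrm{supp}(\hat f)$. Then \[ N^d\le |E|\left(\Lambda_2(\Sigma)-|\Sigma|^2\left(1-\frac{N^d}{|E||\Sigma|}\right)-|\Sigma|(|\Sigma|-1)\left(1-\sqrt{\frac{N^d}{|E||\Sigma|}}\sqrt{\frac{\Lambda_2(E)}{|E|^3}}\right)\right)^{1/3} \] and \[ N^d\le |\Sigma|\left(\Lambda_2(E)-|E|^2\left(1-\frac{N^d}{|E||\Sigma|}\right)-|E|(|E|-1)\left(1-\sqrt{\frac{N^d}{|E||\Sigma|}}\sqrt{\frac{\Lambda_2(\Sigma)}{|\Sigma|^3}}\right)\right)^{1/3}. \]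
   Context: $\mathbb{Z}_N=\mathbb{Z}/N\mathbb{Z}$. The discrete Fourier transform of $f:\mathbb{Z}_N^d\to\mathbb{C}$ is $\hat f(m)=N^{-d/2}\sum_{x\in\mathbb{Z}_N^d}f(x)e^{-2\pi i\, m\cdot x/N}$ for $m\in\mathbb{Z}_N^d$. The support of a function is the set of points where it is nonzero. For $A\subseteq\mathbb{Z}_N^d$, the additive energy is $\Lambda_2(A)=\#\{(x_1,x_2,x_3,x_4)\in A^4: x_1+x_2=x_3+x_4\}$. *)

theory Defs
  imports "HOL-Analysis.Analysis"
begin

text \<open>Points of Z_N^d are represented as functions nat => nat with values < N
  at indices < d and 0 at all indices >= d.\<close>

definition ZNd :: "nat \<Rightarrow> nat \<Rightarrow> (nat \<Rightarrow> nat) set" where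
  "ZNd N d = {x. (\<forall>i<d. x i < N) \<and> (\<forall>i\<ge>d. x i = 0)}"

definition addN :: "nat \<Rightarrow> (nat \<Rightarrow> nat) \<Rightarrow> (nat \<Rightarrow> nat) \<Rightarrow> (nat \<Rightarrow> nat)" where
  "addN N x y = (\<lambda>i. (x i + y i) mod N)"

definition dotN :: "nat \<Rightarrow> (nat \<Rightarrow> nat) \<Rightarrow> (nat \<Rightarrow> nat) \<Rightarrow> nat" where
  "dotN d m x = (\<Sum>i<d. m i * x i)"

definition dft :: "nat \<Rightarrow> nat \<Rightarrow> ((nat \<Rightarrow> nat) \<Rightarrow> complex) \<Rightarrow> (nat \<Rightarrow> nat) \<Rightarrow> complex" where
  "dft N d f m = (1 / (sqrt (real N)) ^ d) *
     (\<Sum>x\<in>ZNd N d. f x * cis (- 2 * pi * real (dotN d m x) / real N))"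

definition suppN :: "nat \<Rightarrow> nat \<Rightarrow> ((nat \<Rightarrow> nat) \<Rightarrow> complex) \<Rightarrow> (nat \<Rightarrow> nat) set" where
  "suppN N d f = {x \<in> ZNd N d. f x \<noteq> 0}"

definition energy :: "nat \<Rightarrow> (nat \<Rightarrow> nat) set \<Rightarrow> nat" where
  "energy N A = card {(x1, x2, x3, x4). x1 \<in> A \<and> x2 \<in> A \<and> x3 \<in> A \<and> x4 \<in> A \<and>
                        addN N x1 x2 = addN N x3 x4}"

end

theory Submission
  imports Defs "HOL-Number_Theory.Cong"
begin

(*
  Let H be one of f, f^ and F the other one, so that F is the Fourier transform of H (up to
  conjugating the characters). Put L = sum |H|^2 = sum |F|^2, s = |supp H|, t = |supp F|,
  n = N^d. Cauchy-Schwarz gives |H a|^2 <= t L / n and L^2 <= t sum |F|^4, and since F^2 is the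
  transform of the convolution H * H, Plancherel gives n sum |F|^4 = sum |H * H|^2, which is at
  most the energy of supp H weighted by |H|. The 2 s^2 - s trivial quadruples (a,b,a,b),
  (a,b,b,a) contribute 2 L^2 - sum |H|^4 <= 2 L^2 - L^2 / s, and every other quadruple at most
  (t L / n)^2. This yields a cubic inequality for n / t; the crude bound n^3 <= s^3 Lambda(supp F),
  obtained in the same way with the roles of H and F exchanged, turns it into the stated one.
*)

definition additive_quadruples :: "('a \<Rightarrow> 'a \<Rightarrow> 'a) \<Rightarrow> 'a set \<Rightarrow> ('a \<times> 'a \<times> 'a \<times> 'a) set" where
  "additive_quadruples add A = {(a, b, c, d). a \<in> A \<and> b \<in> A \<and> c \<in> A \<and> d \<in> A \<and> add a b = add c d}"

definition weighted_energy :: "('a \<Rightarrow> 'a \<Rightarrow> 'a) \<Rightarrow> ('a \<Rightarrow> real) \<Rightarrow> 'a set \<Rightarrow> real" where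
  "weighted_energy add h A = (\<Sum>(a, b, c, d)\<in>additive_quadruples add A. h a * h b * h c * h d)"

lemma finite_additive_quadruples: "finite A \<Longrightarrow> finite (additive_quadruples add A)"
  by (rule finite_subset[of _ "A \<times> A \<times> A \<times> A"]) (auto simp: additive_quadruples_def)

lemma weighted_energy_mono_neutral:
  assumes "finite G" "A \<subseteq> G" and zero: "\<And>a. a \<in> G - A \<Longrightarrow> h a = 0"
  shows "weighted_energy add h G = weighted_energy add h A"
  unfolding weighted_energy_def
proof (rule sum.mono_neutral_right)
  show "finite (additive_quadruples add G)" by (rule finite_additive_quadruples) fact
  show "additive_quadruples add A \<subseteq> additive_quadruples add G"
    using assms(2) by (auto simp: additive_quadruples_def)
  show "\<forall>q\<in>additive_quadruples add G - additive_quadruples add A.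
          (case q of (a, b, c, d) \<Rightarrow> h a * h b * h c * h d) = 0"
    by (auto simp: additive_quadruples_def) (use zero in blast)+
qed

lemma sum_squared_fibre_sums_eq_weighted_energy:
  fixes w :: "'a \<Rightarrow> real"
  assumes fin: "finite G" and closed: "\<And>a b. a \<in> G \<Longrightarrow> b \<in> G \<Longrightarrow> add a b \<in> G"
  shows "(\<Sum>u\<in>G. (\<Sum>(a, b)\<in>{(a, b). a \<in> G \<and> b \<in> G \<and> add a b = u}. w a * w b) ^ 2)
    = weighted_energy add w G"
proof -
  define Q where "Q = additive_quadruples add G"
  have fibre: "(\<Sum>(a, b)\<in>{(a, b). a \<in> G \<and> b \<in> G \<and> add a b = u}. w a * w b) ^ 2
      = (\<Sum>(a, b, c, d)\<in>{q \<in> Q. (case q of (a, b, c, d) \<Rightarrow> add a b) = u}. w a * w b * w c * w d)"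
    for u
  proof -
    define P where "P = {(a, b). a \<in> G \<and> b \<in> G \<and> add a b = u}"
    have "(\<Sum>(a, b)\<in>P. w a * w b) ^ 2 = (\<Sum>((a, b), c, d)\<in>P \<times> P. w a * w b * w c * w d)"
      by (simp add: power2_eq_square sum_product sum.cartesian_product case_prod_unfold mult.assoc)
    also have "\<dots> = (\<Sum>(a, b, c, d)\<in>{q \<in> Q. (case q of (a, b, c, d) \<Rightarrow> add a b) = u}. w a * w b * w c * w d)"
      by (rule sum.reindex_bij_witness[where i = "\<lambda>(a, b, c, d). ((a, b), c, d)"
            and j = "\<lambda>((a, b), c, d). (a, b, c, d)"])
        (auto simp: P_def Q_def additive_quadruples_def)
    finally show ?thesis by (simp add: P_def)
  qed
  have "finite Q" by (simp add: Q_def finite_additive_quadruples fin)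
  moreover have "(\<lambda>(a, b, c, d). add a b) ` Q \<subseteq> G"
    by (auto simp: Q_def additive_quadruples_def closed)
  ultimately show ?thesis
    unfolding fibre weighted_energy_def Q_def[symmetric] by (rule sum.group[OF _ fin])
qed

lemma additive_quadruple_term_le:
  fixes h :: "'a \<Rightarrow> real"
  assumes h: "\<And>a. a \<in> A \<Longrightarrow> 0 \<le> h a \<and> h a ^ 2 \<le> M"
    and "(a, b, c, d) \<in> additive_quadruples add A"
  shows "h a * h b * h c * h d \<le> M ^ 2"
proof -
  have pair_le: "h x * h y \<le> M" if "x \<in> A" "y \<in> A" for x y
    using sum_squares_bound[of "h x" "h y"] h[OF that(1)] h[OF that(2)] by linarith
  have "a \<in> A" "b \<in> A" "c \<in> A" "d \<in> A"
    using assms(2) by (auto simp: additive_quadruples_def)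
  moreover have "0 \<le> M"
    using h[OF \<open>a \<in> A\<close>] by (meson order_trans zero_le_power2)
  ultimately have "(h a * h b) * (h c * h d) \<le> M * M"
    using pair_le h by (intro mult_mono) auto
  then show ?thesis
    by (simp add: power2_eq_square mult.assoc)
qed

lemma weighted_energy_le_card:
  fixes h :: "'a \<Rightarrow> real"
  assumes "\<And>a. a \<in> A \<Longrightarrow> 0 \<le> h a \<and> h a ^ 2 \<le> M"
  shows "weighted_energy add h A \<le> real (card (additive_quadruples add A)) * M ^ 2"
  unfolding weighted_energy_def
  by (rule sum_bounded_above) (use additive_quadruple_term_le[OF assms] in auto)

lemma trivial_additive_quadruples:
  fixes h :: "'a \<Rightarrow> real"
  assumes "finite A" and comm: "\<And>a b. add a b = add b a"
  defines "D \<equiv> (\<lambda>(a, b). (a, b, a, b)) ` (A \<times> A) \<union> (\<lambda>(a, b). (a, b, b, a)) ` (A \<times> A)"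
  shows "D \<subseteq> additive_quadruples add A"
    and "real (card D) = 2 * real (card A) ^ 2 - real (card A)"
    and "(\<Sum>(a, b, c, d)\<in>D. h a * h b * h c * h d) = 2 * (\<Sum>a\<in>A. h a ^ 2) ^ 2 - (\<Sum>a\<in>A. h a ^ 4)"
proof -
  define D1 where "D1 = (\<lambda>(a, b). (a, b, a, b)) ` (A \<times> A)"
  define D2 where "D2 = (\<lambda>(a, b). (a, b, b, a)) ` (A \<times> A)"
  have D: "D = D1 \<union> D2" by (simp add: D_def D1_def D2_def)
  have inj1: "inj_on (\<lambda>(a, b). (a, b, a, b)) (A \<times> A)" and inj2: "inj_on (\<lambda>(a, b). (a, b, b, a)) (A \<times> A)"
    by (auto simp: inj_on_def)
  have D12: "D1 \<inter> D2 = (\<lambda>a. (a, a, a, a)) ` A" by (auto simp: D1_def D2_def)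
  have fin: "finite D1" "finite D2" using assms(1) by (simp_all add: D1_def D2_def)
  show "D \<subseteq> additive_quadruples add A" by (auto simp: D_def additive_quadruples_def comm)
  have "card D + card A = 2 * card A ^ 2"
    using card_Un_Int[OF fin] unfolding D D12
    by (simp add: D1_def D2_def card_image inj1 inj2 inj_on_def card_cartesian_product power2_eq_square)
  then show "real (card D) = 2 * real (card A) ^ 2 - real (card A)" by (simp add: algebra_simps flip: of_nat_add)
  define T where "T = (\<lambda>(a, b, c, d). h a * h b * h c * h d)"
  have square: "(\<Sum>(a, b)\<in>A \<times> A. h a ^ 2 * h b ^ 2) = (\<Sum>a\<in>A. h a ^ 2) ^ 2"
    by (simp add: power2_eq_square[of "sum _ _"] sum_product sum.cartesian_product)
  have "sum T D1 = (\<Sum>a\<in>A. h a ^ 2) ^ 2" "sum T D2 = (\<Sum>a\<in>A. h a ^ 2) ^ 2"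
    unfolding D1_def D2_def sum.reindex[OF inj1] sum.reindex[OF inj2] square[symmetric]
    by (auto simp: T_def power2_eq_square mult_ac intro!: sum.cong)
  moreover have "sum T (D1 \<inter> D2) = (\<Sum>a\<in>A. h a ^ 4)"
    by (simp add: D12 sum.reindex inj_on_def T_def power4_eq_xxxx)
  ultimately show "(\<Sum>(a, b, c, d)\<in>D. h a * h b * h c * h d) = 2 * (\<Sum>a\<in>A. h a ^ 2) ^ 2 - (\<Sum>a\<in>A. h a ^ 4)"
    using sum.union_inter[OF fin, of T] unfolding D T_def by simp
qed

lemma weighted_energy_le_refined:
  fixes h :: "'a \<Rightarrow> real"
  assumes fin: "finite A" and comm: "\<And>a b. add a b = add b a"
    and h: "\<And>a. a \<in> A \<Longrightarrow> 0 \<le> h a \<and> h a ^ 2 \<le> M"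
  defines "L \<equiv> (\<Sum>a\<in>A. h a ^ 2)" and "s \<equiv> real (card A)"
  shows "weighted_energy add h A \<le>
    2 * L ^ 2 - L ^ 2 / s + (real (card (additive_quadruples add A)) - 2 * s ^ 2 + s) * M ^ 2"
proof -
  define Q where "Q = additive_quadruples add A"
  define D where "D = (\<lambda>(a, b). (a, b, a, b)) ` (A \<times> A) \<union> (\<lambda>(a, b). (a, b, b, a)) ` (A \<times> A)"
  define T where "T = (\<lambda>(a, b, c, d). h a * h b * h c * h d)"
  note trivial = trivial_additive_quadruples[of A add, OF fin comm, folded D_def Q_def]
  have finQ: "finite Q" by (simp add: Q_def finite_additive_quadruples fin)
  have "sum T (Q - D) \<le> real (card (Q - D)) * M ^ 2"
    by (rule sum_bounded_above) (use additive_quadruple_term_le[OF h] in \<open>auto simp: T_def Q_def\<close>)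
  also have "real (card (Q - D)) = real (card Q) - (2 * s ^ 2 - s)"
    using trivial(1,2) finQ by (simp add: card_Diff_subset of_nat_diff card_mono finite_subset s_def)
  finally have rest: "sum T (Q - D) \<le> (real (card Q) - 2 * s ^ 2 + s) * M ^ 2"
    by argo
  have "L ^ 2 \<le> (\<Sum>a\<in>A. (h a ^ 2) ^ 2) * s"
    unfolding L_def s_def by (rule sum_squared_le_sum_of_squares)
  then have fourth: "L ^ 2 / s \<le> (\<Sum>a\<in>A. h a ^ 4)"
    by (cases "s = 0") (auto simp: pos_divide_le_eq s_def sum_nonneg simp flip: power_mult)
  have "weighted_energy add h A = sum T D + sum T (Q - D)"
    unfolding weighted_energy_def T_def[symmetric] Q_def[symmetric]
    using sum.subset_diff[OF trivial(1) finQ] by (simp add: add.commute)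
  moreover have "sum T D = 2 * L ^ 2 - (\<Sum>a\<in>A. h a ^ 4)"
    unfolding T_def L_def by (rule trivial(3))
  ultimately show ?thesis
    using rest fourth unfolding Q_def by linarith
qed

lemma sum_squared_le_card_nonzero_mult_sum_squares:
  fixes g :: "'a \<Rightarrow> real"
  assumes "finite G"
  shows "(\<Sum>x\<in>G. g x) ^ 2 \<le> real (card {x\<in>G. g x \<noteq> 0}) * (\<Sum>x\<in>G. g x ^ 2)"
proof -
  have "(\<Sum>x\<in>G. g x) = (\<Sum>x\<in>{x\<in>G. g x \<noteq> 0}. g x)"
    and "(\<Sum>x\<in>G. g x ^ 2) = (\<Sum>x\<in>{x\<in>G. g x \<noteq> 0}. g x ^ 2)"
    by (rule sum.mono_neutral_right; use assms in auto)+
  then show ?thesis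
    using sum_squared_le_sum_of_squares[of g "{x\<in>G. g x \<noteq> 0}"] by (simp add: mult.commute)
qed

lemma cube_root_bound:
  fixes n t s QA QB :: real
  assumes n: "0 < n" and t: "0 < t" and s: "1 \<le> s" and "0 \<le> QB"
    and refined: "n / t \<le> 2 - 1 / s + (QA - 2 * s ^ 2 + s) * t ^ 2 / n ^ 2"
    and cubic: "n ^ 3 \<le> s ^ 3 * QB"
    and uncertainty: "n \<le> t * s"
  shows "n \<le> t * root 3 (QA - s ^ 2 * (1 - n / (t * s))
            - s * (s - 1) * (1 - sqrt (n / (t * s)) * sqrt (QB / t ^ 3)))"
proof -
  define r where "r = n / t"
  define R where "R = sqrt (n / (t * s)) * sqrt (QB / t ^ 3)"
  define K where "K = QA - 2 * s ^ 2 + s"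
  (* refined gives r^3 <= (2 - 1/s) r^2 + K; the two r^2 terms are absorbed using r <= s and
     r^2 / s^2 <= R, which is where cubic enters. *)
  have r: "0 < r" using n t by (simp add: r_def)
  have "r * r ^ 2 \<le> (2 - 1 / s + K * t ^ 2 / n ^ 2) * r ^ 2"
    using refined r by (intro mult_right_mono) (auto simp: r_def K_def)
  also have "\<dots> = (2 - 1 / s) * r ^ 2 + K"
    using n t by (simp add: r_def power_divide field_simps)
  finally have cube: "r ^ 3 \<le> (2 - 1 / s) * r ^ 2 + K"
    by (simp add: power3_eq_cube power2_eq_square)
  have "r \<le> s"
    using uncertainty t by (simp add: r_def divide_le_eq mult.commute)
  then have linear: "r ^ 2 \<le> s * r"
    using r by (simp add: power2_eq_square mult_right_mono)
  have "(r ^ 2 / s ^ 2) ^ 2 = n * n ^ 3 / (s ^ 3 * s * t ^ 4)"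
    using s by (simp add: r_def field_simps eval_nat_numeral)
  also have "\<dots> \<le> n * (s ^ 3 * QB) / (s ^ 3 * s * t ^ 4)"
    using cubic n s t by (intro divide_right_mono mult_left_mono) auto
  also have "\<dots> = (n / (t * s)) * (QB / t ^ 3)"
    using s t by (simp add: field_simps eval_nat_numeral)
  finally have "r ^ 2 / s ^ 2 \<le> R"
    unfolding R_def real_sqrt_mult[symmetric] by (simp add: real_le_rsqrt)
  then have "s * (s - 1) * (r ^ 2 / s ^ 2) \<le> s * (s - 1) * R"
    using s by (intro mult_left_mono) auto
  moreover have "(1 - 1 / s) * r ^ 2 = s * (s - 1) * (r ^ 2 / s ^ 2)"
    using s by (simp add: power2_eq_square field_simps)
  ultimately have quadratic: "(1 - 1 / s) * r ^ 2 \<le> s * (s - 1) * R"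
    by simp
  have "QA - s ^ 2 * (1 - n / (t * s)) - s * (s - 1) * (1 - R) = K + s * r + s * (s - 1) * R"
    using s t by (simp add: K_def r_def power2_eq_square field_simps)
  then have "r ^ 3 \<le> QA - s ^ 2 * (1 - n / (t * s)) - s * (s - 1) * (1 - R)"
    using cube linear quadratic by (simp add: algebra_simps)
  then have "r \<le> root 3 (QA - s ^ 2 * (1 - n / (t * s)) - s * (s - 1) * (1 - R))"
    using r by (metis real_root_le_iff real_root_power_cancel less_imp_le zero_less_numeral)
  then show ?thesis
    using t by (simp add: R_def r_def divide_le_eq mult.commute)
qed

(* phi a x plays the role of exp (2 pi i a.x / N). The conjugate characters satisfy the same
   axioms, and running the argument for both systems gives the two inequalities. *)
locale symmetric_characters =
  fixes G :: "'a set" and add :: "'a \<Rightarrow> 'a \<Rightarrow> 'a" and \<phi> :: "'a \<Rightarrow> 'a \<Rightarrow> complex"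
  assumes finite_G: "finite G"
    and add_closed: "a \<in> G \<Longrightarrow> b \<in> G \<Longrightarrow> add a b \<in> G"
    and add_commute: "add a b = add b a"
    and character_symmetric: "a \<in> G \<Longrightarrow> x \<in> G \<Longrightarrow> \<phi> a x = \<phi> x a"
    and character_add: "a \<in> G \<Longrightarrow> b \<in> G \<Longrightarrow> x \<in> G \<Longrightarrow> \<phi> (add a b) x = \<phi> a x * \<phi> b x"
    and norm_character: "a \<in> G \<Longrightarrow> x \<in> G \<Longrightarrow> norm (\<phi> a x) = 1"
    and characters_orthogonal: "a \<in> G \<Longrightarrow> b \<in> G \<Longrightarrow> a \<noteq> b \<Longrightarrow> (\<Sum>x\<in>G. \<phi> a x * cnj (\<phi> b x)) = 0"
begin

abbreviation supp :: "('a \<Rightarrow> complex) \<Rightarrow> 'a set" where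
  "supp H \<equiv> {a \<in> G. H a \<noteq> 0}"

definition transform :: "('a \<Rightarrow> complex) \<Rightarrow> 'a \<Rightarrow> complex" where
  "transform H x = (\<Sum>a\<in>G. H a * \<phi> a x) / complex_of_real (sqrt (real (card G)))"

definition conjugate_transform :: "('a \<Rightarrow> complex) \<Rightarrow> 'a \<Rightarrow> complex" where
  "conjugate_transform F a = (\<Sum>x\<in>G. F x * cnj (\<phi> x a)) / complex_of_real (sqrt (real (card G)))"

definition convolution :: "('a \<Rightarrow> complex) \<Rightarrow> 'a \<Rightarrow> complex" where
  "convolution H u = (\<Sum>(a, b)\<in>{(a, b). a \<in> G \<and> b \<in> G \<and> add a b = u}. H a * H b)"

lemma conjugate_characters: "symmetric_characters G add (\<lambda>a x. cnj (\<phi> a x))"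
proof
  fix a b assume "a \<in> G" "b \<in> G" "a \<noteq> b"
  then show "(\<Sum>x\<in>G. cnj (\<phi> a x) * cnj (cnj (\<phi> b x))) = 0"
    using arg_cong[OF characters_orthogonal[of a b], of cnj] by (simp add: cnj_sum)
qed (use finite_G add_closed add_commute character_symmetric character_add norm_character in auto)

lemma sum_character_mult_cnj:
  assumes "a \<in> G" "b \<in> G"
  shows "(\<Sum>x\<in>G. \<phi> a x * cnj (\<phi> b x)) = (if a = b then of_nat (card G) else 0)"
proof (cases "a = b")
  case True
  have "\<phi> a x * cnj (\<phi> a x) = 1" if "x \<in> G" for x
    using norm_character[OF assms(1) that] by (simp flip: complex_norm_square)
  then show ?thesis using True by simp
qed (simp add: assms characters_orthogonal)

lemma sum_norm_squared_character_combination: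
  "(\<Sum>x\<in>G. (norm (\<Sum>a\<in>G. K a * \<phi> a x)) ^ 2) = real (card G) * (\<Sum>a\<in>G. (norm (K a)) ^ 2)"
proof -
  have "complex_of_real (\<Sum>x\<in>G. (norm (\<Sum>a\<in>G. K a * \<phi> a x)) ^ 2)
      = (\<Sum>x\<in>G. (\<Sum>a\<in>G. K a * \<phi> a x) * cnj (\<Sum>b\<in>G. K b * \<phi> b x))"
    by (simp only: of_real_sum complex_norm_square)
  also have "\<dots> = (\<Sum>x\<in>G. \<Sum>a\<in>G. \<Sum>b\<in>G. K a * cnj (K b) * (\<phi> a x * cnj (\<phi> b x)))"
    by (simp add: cnj_sum sum_product mult_ac)
  also have "\<dots> = (\<Sum>a\<in>G. \<Sum>b\<in>G. K a * cnj (K b) * (\<Sum>x\<in>G. \<phi> a x * cnj (\<phi> b x)))"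
    by (subst sum.swap, rule sum.cong[OF refl], subst sum.swap) (simp add: sum_distrib_left)
  also have "\<dots> = (\<Sum>a\<in>G. \<Sum>b\<in>G. if a = b then K a * cnj (K b) * of_nat (card G) else 0)"
    by (intro sum.cong refl) (simp add: sum_character_mult_cnj)
  also have "\<dots> = (\<Sum>a\<in>G. K a * cnj (K a) * of_nat (card G))"
    by (simp add: finite_G)
  also have "\<dots> = complex_of_real (real (card G) * (\<Sum>a\<in>G. (norm (K a)) ^ 2))"
    by (simp only: of_real_mult of_real_sum complex_norm_square of_real_of_nat_eq sum_distrib_left)
      (simp add: mult_ac)
  finally show ?thesis by (simp only: of_real_eq_iff)
qed

lemma plancherel: "(\<Sum>x\<in>G. (norm (transform H x)) ^ 2) = (\<Sum>a\<in>G. (norm (H a)) ^ 2)"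
  by (simp add: transform_def norm_divide power_divide sum_norm_squared_character_combination
      card_eq_0_iff finite_G flip: sum_divide_distrib)

lemma card_G_pos: "x \<in> G \<Longrightarrow> 0 < card G"
  using finite_G card_gt_0_iff by blast

lemma sqrt_card_G_squared: "complex_of_real (sqrt (real (card G))) ^ 2 = of_nat (card G)"
  by (simp flip: of_real_power)

lemma transform_conjugate_transform:
  assumes x: "x \<in> G"
  shows "transform (conjugate_transform F) x = F x"
proof -
  define r where "r = complex_of_real (sqrt (real (card G)))"
  have "(\<Sum>a\<in>G. conjugate_transform F a * \<phi> a x)
      = (\<Sum>a\<in>G. \<Sum>y\<in>G. F y * (\<phi> x a * cnj (\<phi> y a))) / r"
    by (simp add: conjugate_transform_def r_def character_symmetric[OF _ x] sum_divide_distrib sum_distrib_left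
        sum_distrib_right mult_ac)
  also have "\<dots> = (\<Sum>y\<in>G. F y * (\<Sum>a\<in>G. \<phi> x a * cnj (\<phi> y a))) / r"
    by (subst sum.swap) (simp add: sum_distrib_left)
  also have "\<dots> = F x * of_nat (card G) / r"
    using x by (simp add: sum_character_mult_cnj finite_G if_distrib[of "\<lambda>c. _ * c"] cong: sum.cong if_cong)
  finally show ?thesis
    using card_G_pos[OF x] sqrt_card_G_squared
    by (simp add: transform_def r_def power2_eq_square)
qed

lemma conjugate_characters_transforms:
  "symmetric_characters.transform G (\<lambda>a x. cnj (\<phi> a x)) = conjugate_transform"
  "symmetric_characters.conjugate_transform G (\<lambda>a x. cnj (\<phi> a x)) = transform"
proof -
  interpret conjugate: symmetric_characters G add "\<lambda>a x. cnj (\<phi> a x)"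
    by (rule conjugate_characters)
  show "conjugate.transform = conjugate_transform" "conjugate.conjugate_transform = transform"
    by (simp_all add: fun_eq_iff conjugate.transform_def conjugate.conjugate_transform_def
        transform_def conjugate_transform_def)
qed

lemma conjugate_transform_transform: "a \<in> G \<Longrightarrow> conjugate_transform (transform H) a = H a"
  using symmetric_characters.transform_conjugate_transform[OF conjugate_characters]
  by (simp add: conjugate_characters_transforms)

lemma norm_transform_squared_le:
  assumes x: "x \<in> G"
  shows "norm (transform H x) ^ 2 \<le> real (card (supp H)) * (\<Sum>a\<in>G. norm (H a) ^ 2) / real (card G)"
proof -
  have "norm (\<Sum>a\<in>G. H a * \<phi> a x) \<le> (\<Sum>a\<in>G. norm (H a))"
    using norm_sum[of "\<lambda>a. H a * \<phi> a x" G] by (simp add: norm_mult norm_character x)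
  then have "norm (\<Sum>a\<in>G. H a * \<phi> a x) ^ 2 \<le> (\<Sum>a\<in>G. norm (H a)) ^ 2"
    by (simp add: power_mono)
  also have "\<dots> \<le> real (card (supp H)) * (\<Sum>a\<in>G. norm (H a) ^ 2)"
    using sum_squared_le_card_nonzero_mult_sum_squares[OF finite_G, of "\<lambda>a. norm (H a)"] by simp
  finally show ?thesis
    by (simp add: transform_def norm_divide power_divide divide_right_mono)
qed

lemma norm_squared_le_card_supp_transform:
  assumes a: "a \<in> G"
  shows "norm (H a) ^ 2 \<le> real (card (supp (transform H))) * (\<Sum>b\<in>G. norm (H b) ^ 2) / real (card G)"
proof -
  interpret conjugate: symmetric_characters G add "\<lambda>a x. cnj (\<phi> a x)"
    by (rule conjugate_characters)
  show ?thesis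
    using conjugate.norm_transform_squared_le[OF a, of "transform H"]
    by (simp add: conjugate_characters_transforms conjugate_transform_transform a plancherel)
qed

theorem uncertainty_principle:
  assumes "supp H \<noteq> {}"
  shows "card G \<le> card (supp H) * card (supp (transform H))"
proof -
  define L where "L = (\<Sum>a\<in>G. norm (H a) ^ 2)"
  have "0 < L"
    using assms finite_G by (auto simp: L_def intro!: sum_pos2)
  have "L = (\<Sum>a\<in>supp H. norm (H a) ^ 2)"
    unfolding L_def by (rule sum.mono_neutral_right) (auto simp: finite_G)
  also have "\<dots> \<le> real (card (supp H)) * (real (card (supp (transform H))) * L / real (card G))"
    by (rule sum_bounded_above) (simp add: norm_squared_le_card_supp_transform L_def)
  finally have "real (card G) * L \<le> real (card (supp H) * card (supp (transform H))) * L"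
    using assms card_G_pos by (auto simp: field_simps)
  then show ?thesis
    using \<open>0 < L\<close> by (simp del: of_nat_mult)
qed

lemma transform_squared:
  assumes x: "x \<in> G"
  shows "transform H x ^ 2 = transform (convolution H) x / complex_of_real (sqrt (real (card G)))"
proof -
  define P where "P u = {(a, b). a \<in> G \<and> b \<in> G \<and> add a b = u}" for u
  have "(\<Sum>a\<in>G. H a * \<phi> a x) ^ 2 = (\<Sum>(a, b)\<in>G \<times> G. H a * H b * \<phi> (add a b) x)"
    unfolding power2_eq_square sum_product sum.cartesian_product
    by (intro sum.cong refl) (auto simp: character_add x)
  also have "\<dots> = (\<Sum>u\<in>G. \<Sum>(a, b)\<in>P u. H a * H b * \<phi> (add a b) x)"
  proof -
    have "P u = {p. p \<in> G \<times> G \<and> (\<lambda>(a, b). add a b) p = u}" for u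
      by (auto simp: P_def)
    then show ?thesis
      by (simp only:) (rule sum.group[symmetric]; auto simp: finite_G add_closed)
  qed
  also have "\<dots> = (\<Sum>u\<in>G. convolution H u * \<phi> u x)"
    unfolding convolution_def P_def sum_distrib_right by (intro sum.cong refl) auto
  finally show ?thesis
    using sqrt_card_G_squared by (simp add: transform_def power_divide power2_eq_square)
qed

lemma fourth_moment_le_weighted_energy:
  "real (card G) * (\<Sum>x\<in>G. norm (transform H x) ^ 4) \<le> weighted_energy add (\<lambda>a. norm (H a)) (supp H)"
proof (cases "G = {}")
  case True
  then show ?thesis by (auto simp: weighted_energy_def intro!: sum_nonneg)
next
  case False
  then have n: "0 < card G" using finite_G card_gt_0_iff by blast
  have "norm (transform H x) ^ 4 = norm (transform (convolution H) x) ^ 2 / card G" if "x \<in> G" for x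
  proof -
    have "norm (transform H x) ^ 4 = norm (transform H x ^ 2) ^ 2"
      by (simp add: norm_power flip: power_mult)
    then show ?thesis
      by (simp add: transform_squared[OF that] norm_divide power_divide)
  qed
  then have "(\<Sum>x\<in>G. norm (transform H x) ^ 4) = (\<Sum>x\<in>G. norm (transform (convolution H) x) ^ 2) / card G"
    by (simp add: sum_divide_distrib)
  then have "real (card G) * (\<Sum>x\<in>G. norm (transform H x) ^ 4) = (\<Sum>u\<in>G. norm (convolution H u) ^ 2)"
    using n by (simp add: plancherel)
  also have "\<dots> \<le> (\<Sum>u\<in>G. (\<Sum>(a, b)\<in>{(a, b). a \<in> G \<and> b \<in> G \<and> add a b = u}.
                        norm (H a) * norm (H b)) ^ 2)"
    unfolding convolution_def
    by (intro sum_mono power_mono order_trans[OF norm_sum]) (auto simp: norm_mult case_prod_unfold)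
  also have "\<dots> = weighted_energy add (\<lambda>a. norm (H a)) G"
    by (rule sum_squared_fibre_sums_eq_weighted_energy[OF finite_G add_closed])
  also have "\<dots> = weighted_energy add (\<lambda>a. norm (H a)) (supp H)"
    by (rule weighted_energy_mono_neutral) (auto simp: finite_G)
  finally show ?thesis .
qed

lemma weighted_energy_lower_bound:
  "real (card G) / real (card (supp (transform H))) * (\<Sum>a\<in>G. norm (H a) ^ 2) ^ 2
    \<le> weighted_energy add (\<lambda>a. norm (H a)) (supp H)"
proof -
  define t where "t = real (card (supp (transform H)))"
  define X where "X = (\<Sum>x\<in>G. norm (transform H x) ^ 4)"
  define W where "W = weighted_energy add (\<lambda>a. norm (H a)) (supp H)"
  have "(\<Sum>a\<in>G. norm (H a) ^ 2) ^ 2 = (\<Sum>x\<in>G. norm (transform H x) ^ 2) ^ 2"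
    by (simp add: plancherel)
  also have "\<dots> \<le> t * X"
    using sum_squared_le_card_nonzero_mult_sum_squares[OF finite_G, of "\<lambda>x. norm (transform H x) ^ 2"]
    by (simp add: t_def X_def flip: power_mult)
  moreover have "0 \<le> X" "0 \<le> t"
    by (simp_all add: X_def t_def sum_nonneg)
  ultimately have "(\<Sum>a\<in>G. norm (H a) ^ 2) ^ 2 / t \<le> X"
    by (cases "t = 0") (simp_all add: divide_le_eq mult.commute)
  then have "real (card G) * ((\<Sum>a\<in>G. norm (H a) ^ 2) ^ 2 / t) \<le> real (card G) * X"
    by (rule mult_left_mono) simp
  then have "real (card G) / t * (\<Sum>a\<in>G. norm (H a) ^ 2) ^ 2 \<le> real (card G) * X"
    by simp
  also have "\<dots> \<le> W"
    using fourth_moment_le_weighted_energy by (simp add: X_def W_def)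
  finally show ?thesis
    by (simp add: t_def W_def)
qed

lemma additive_energy_lower_bounds:
  assumes "supp H \<noteq> {}"
  defines "n \<equiv> real (card G)" and "t \<equiv> real (card (supp (transform H)))"
    and "s \<equiv> real (card (supp H))" and "q \<equiv> real (card (additive_quadruples add (supp H)))"
  shows "n ^ 3 \<le> t ^ 3 * q"
    and "n / t \<le> 2 - 1 / s + (q - 2 * s ^ 2 + s) * t ^ 2 / n ^ 2"
proof -
  define L where "L = (\<Sum>a\<in>G. norm (H a) ^ 2)"
  define M where "M = t * L / n"
  define W where "W = weighted_energy add (\<lambda>a. norm (H a)) (supp H)"
  have L: "0 < L"
    using assms(1) finite_G by (auto simp: L_def intro!: sum_pos2)
  have n: "0 < n"
    using assms(1) card_G_pos by (auto simp: n_def)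
  have "n \<le> s * t"
    using uncertainty_principle[OF assms(1)] by (simp add: n_def s_def t_def flip: of_nat_mult)
  then have t: "0 < t"
    using n by (auto simp: t_def intro: ccontr)
  have bound: "0 \<le> norm (H a) \<and> norm (H a) ^ 2 \<le> M" if "a \<in> supp H" for a
    using that norm_squared_le_card_supp_transform[of a H] by (simp add: M_def L_def t_def n_def)
  have key: "n / t * L ^ 2 \<le> W"
    using weighted_energy_lower_bound[of H] by (simp add: n_def t_def L_def W_def)
  have "n / t * L ^ 2 \<le> q * t ^ 2 / n ^ 2 * L ^ 2"
    using key weighted_energy_le_card[of "supp H" "\<lambda>a. norm (H a)" M add] bound
    by (simp add: W_def q_def M_def power_divide power_mult_distrib)
  then have "n / t \<le> q * t ^ 2 / n ^ 2"
    using L by (simp only: mult_le_cancel_right_pos zero_less_power)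
  then show "n ^ 3 \<le> t ^ 3 * q"
    using n t by (simp add: field_simps power3_eq_cube power2_eq_square)
  have "(\<Sum>a\<in>supp H. norm (H a) ^ 2) = L"
    unfolding L_def by (rule sum.mono_neutral_left) (auto simp: finite_G)
  then have "W \<le> 2 * L ^ 2 - L ^ 2 / s + (q - 2 * s ^ 2 + s) * M ^ 2"
    using weighted_energy_le_refined[of "supp H" add "\<lambda>a. norm (H a)" M] bound
    by (simp add: W_def q_def s_def finite_G add_commute[of _])
  also have "\<dots> = (2 - 1 / s + (q - 2 * s ^ 2 + s) * t ^ 2 / n ^ 2) * L ^ 2"
    using n by (simp add: M_def power_divide power_mult_distrib algebra_simps)
  finally have "n / t * L ^ 2 \<le> (2 - 1 / s + (q - 2 * s ^ 2 + s) * t ^ 2 / n ^ 2) * L ^ 2"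
    using key by linarith
  then show "n / t \<le> 2 - 1 / s + (q - 2 * s ^ 2 + s) * t ^ 2 / n ^ 2"
    using L by (simp only: mult_le_cancel_right_pos zero_less_power)
qed

theorem energy_uncertainty_principle:
  assumes "supp H \<noteq> {}"
  defines "n \<equiv> real (card G)" and "t \<equiv> real (card (supp (transform H)))"
    and "s \<equiv> real (card (supp H))"
  shows "n \<le> t * root 3 (real (card (additive_quadruples add (supp H))) - s ^ 2 * (1 - n / (t * s))
            - s * (s - 1) * (1 - sqrt (n / (t * s))
                * sqrt (real (card (additive_quadruples add (supp (transform H)))) / t ^ 3)))"
proof -
  interpret conjugate: symmetric_characters G add "\<lambda>a x. cnj (\<phi> a x)"
    by (rule conjugate_characters)
  have uncertainty: "n \<le> t * s"
    using uncertainty_principle[OF assms(1)] by (simp add: n_def s_def t_def mult.commute flip: of_nat_mult)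
  have n: "0 < n"
    using assms(1) card_G_pos by (auto simp: n_def)
  with uncertainty have "0 < t" "0 < s"
    by (auto simp: t_def s_def intro: ccontr)
  then have "supp (transform H) \<noteq> {}"
    unfolding t_def by (metis card.empty of_nat_0 less_irrefl)
  moreover have "conjugate.supp (conjugate.transform (transform H)) = supp H"
    by (auto simp: conjugate_characters_transforms conjugate_transform_transform)
  ultimately have "n ^ 3 \<le> s ^ 3 * real (card (additive_quadruples add (supp (transform H))))"
    using conjugate.additive_energy_lower_bounds(1)[of "transform H"] by (simp add: n_def s_def)
  with additive_energy_lower_bounds(2)[OF assms(1)] n uncertainty \<open>0 < t\<close> \<open>0 < s\<close> show ?thesis
    unfolding n_def t_def s_def by (intro cube_root_bound) auto
qed

end

definition character :: "nat \<Rightarrow> nat \<Rightarrow> (nat \<Rightarrow> nat) \<Rightarrow> (nat \<Rightarrow> nat) \<Rightarrow> complex" where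
  "character N d m x = cis (2 * pi * real (dotN d m x) / real N)"

lemma cis_2pi_div_eq_iff:
  "0 < N \<Longrightarrow> cis (2 * pi * real j / real N) = cis (2 * pi * real k / real N) \<longleftrightarrow> j mod N = k mod N"
  using complex_root_unity_eq[of N j k] by (simp add: cis_conv_exp mult_ac)

lemma finite_ZNd: "finite (ZNd N d)" and card_ZNd: "card (ZNd N d) = N ^ d"
proof -
  have "bij_betw (\<lambda>x. restrict x {..<d}) (ZNd N d) (PiE {..<d} (\<lambda>_. {..<N}))"
  proof (rule bij_betw_byWitness[where f' = "\<lambda>y i. if i < d then y i else 0"])
    show "\<forall>x\<in>ZNd N d. (\<lambda>i. if i < d then restrict x {..<d} i else 0) = x"
      by (auto simp: ZNd_def fun_eq_iff)
    show "\<forall>y\<in>PiE {..<d} (\<lambda>_. {..<N}). restrict (\<lambda>i. if i < d then y i else 0) {..<d} = y"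
      by (auto simp: PiE_def extensional_def fun_eq_iff)
    show "(\<lambda>x. restrict x {..<d}) ` ZNd N d \<subseteq> PiE {..<d} (\<lambda>_. {..<N})"
      by (auto simp: ZNd_def PiE_def extensional_def)
    show "(\<lambda>y i. if i < d then y i else 0) ` PiE {..<d} (\<lambda>_. {..<N}) \<subseteq> ZNd N d"
      by (auto simp: ZNd_def PiE_def Pi_def)
  qed
  then show "finite (ZNd N d)" "card (ZNd N d) = N ^ d"
    by (simp_all add: bij_betw_finite bij_betw_same_card card_PiE finite_PiE)
qed

lemma addN_ZNd: "0 < N \<Longrightarrow> x \<in> ZNd N d \<Longrightarrow> y \<in> ZNd N d \<Longrightarrow> addN N x y \<in> ZNd N d"
  by (auto simp: ZNd_def addN_def)

lemma dotN_commute: "dotN d m x = dotN d x m"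
  by (simp add: dotN_def mult.commute)

lemma dotN_addN_mod: "dotN d m (addN N x y) mod N = (dotN d m x + dotN d m y) mod N"
proof -
  have "dotN d m (addN N x y) mod N = (\<Sum>i<d. m i * ((x i + y i) mod N) mod N) mod N"
    by (simp add: dotN_def addN_def mod_sum_eq)
  also have "\<dots> = (\<Sum>i<d. m i * (x i + y i)) mod N"
    by (simp add: mod_mult_right_eq mod_sum_eq)
  also have "\<dots> = (dotN d m x + dotN d m y) mod N"
    by (simp add: dotN_def sum.distrib algebra_simps)
  finally show ?thesis .
qed

lemma character_addN:
  assumes "0 < N"
  shows "character N d m (addN N x y) = character N d m x * character N d m y"
proof -
  have "character N d m (addN N x y) = cis (2 * pi * real (dotN d m x + dotN d m y) / real N)"
    unfolding character_def using assms by (simp only: cis_2pi_div_eq_iff dotN_addN_mod)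
  then show ?thesis
    by (simp add: character_def cis_mult add_divide_distrib distrib_left)
qed

lemma character_commute: "character N d m x = character N d x m"
  by (simp add: character_def dotN_commute)

lemma sum_ZNd_translate:
  assumes "0 < N" and y: "y \<in> ZNd N d"
  shows "(\<Sum>x\<in>ZNd N d. g (addN N x y)) = (\<Sum>x\<in>ZNd N d. g x)"
proof (rule sum.reindex_bij_betw)
  have "inj_on (\<lambda>x. addN N x y) (ZNd N d)"
  proof (rule inj_onI, rule ext)
    fix a b i assume a: "a \<in> ZNd N d" and b: "b \<in> ZNd N d" and "addN N a y = addN N b y"
    then have "(a i + y i) mod N = (b i + y i) mod N"
      by (metis addN_def)
    then have "a i mod N = b i mod N"
      using cong_add_rcancel_nat unfolding cong_def by blast
    then show "a i = b i"
      using a b by (cases "i < d") (simp_all add: ZNd_def)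
  qed
  moreover have "(\<lambda>x. addN N x y) ` ZNd N d = ZNd N d"
    using endo_inj_surj[OF finite_ZNd _ calculation] addN_ZNd[OF assms(1) _ y] by blast
  ultimately show "bij_betw (\<lambda>x. addN N x y) (ZNd N d) (ZNd N d)"
    by (simp add: bij_betw_def)
qed

lemma sum_character_orthogonal:
  assumes N: "0 < N" and u: "u \<in> ZNd N d" and v: "v \<in> ZNd N d" and "u \<noteq> v"
  shows "(\<Sum>x\<in>ZNd N d. character N d u x * cnj (character N d v x)) = 0"
proof -
  obtain i where "u i \<noteq> v i"
    using \<open>u \<noteq> v\<close> by auto
  moreover have "i < d"
  proof (rule ccontr)
    assume "\<not> i < d"
    then show False using u v \<open>u i \<noteq> v i\<close> by (simp add: ZNd_def)
  qed
  moreover have "u i < N" "v i < N"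
    using u v \<open>i < d\<close> by (simp_all add: ZNd_def)
  ultimately have "1 < N"
    by (cases "u i < v i") auto
  define e where "e = (\<lambda>j. if j = i then 1 else 0 :: nat)"
  have e: "e \<in> ZNd N d"
    using \<open>i < d\<close> \<open>1 < N\<close> by (auto simp: ZNd_def e_def)
  have dotN_e: "dotN d w e = w i" for w
    using \<open>i < d\<close> by (simp add: dotN_def e_def if_distrib cong: if_cong)
  (* translating by the unit vector e multiplies the sum by c, and c \<noteq> 1 *)
  define c where "c = character N d u e * cnj (character N d v e)"
  define S where "S = (\<Sum>x\<in>ZNd N d. character N d u x * cnj (character N d v x))"
  have "S = (\<Sum>x\<in>ZNd N d. character N d u (addN N x e) * cnj (character N d v (addN N x e)))"
    unfolding S_def by (rule sum_ZNd_translate[OF N e, symmetric])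
  also have "\<dots> = S * c"
    by (simp add: S_def c_def character_addN[OF N] sum_distrib_left mult_ac)
  finally have "S = S * c" .
  moreover have "c \<noteq> 1"
  proof
    assume "c = 1"
    have unit: "character N d v e * cnj (character N d v e) = 1"
      by (simp add: character_def cis_cnj cis_mult)
    have "character N d u e = character N d u e * (character N d v e * cnj (character N d v e))"
      by (simp add: unit)
    also have "\<dots> = c * character N d v e"
      by (simp add: c_def mult_ac)
    also have "\<dots> = character N d v e"
      using \<open>c = 1\<close> by simp
    finally have "u i mod N = v i mod N"
      using N by (simp add: character_def dotN_e cis_2pi_div_eq_iff)
    then show False
      using u v \<open>u i \<noteq> v i\<close> \<open>i < d\<close> by (simp add: ZNd_def)
  qed
  ultimately show ?thesis
    unfolding S_def by (metis mult.right_neutral mult_left_cancel right_minus_eq eq_iff_diff_eq_0)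
qed

lemma ZNd_symmetric_characters:
  assumes "0 < N"
  shows "symmetric_characters (ZNd N d) (addN N) (character N d)"
proof
  fix a b x assume "a \<in> ZNd N d" "b \<in> ZNd N d"
  then show "addN N a b \<in> ZNd N d"
    by (simp add: addN_ZNd assms)
  show "character N d (addN N a b) x = character N d a x * character N d b x"
    using character_addN[OF assms, of d x a b] by (simp add: character_commute[of N d _ x])
next
  fix a x show "norm (character N d a x) = 1"
    by (simp add: character_def)
qed (simp_all add: assms finite_ZNd addN_def add.commute character_commute sum_character_orthogonal)

lemma dft_conjugate_transform:
  assumes "0 < N"
  shows "dft N d f = symmetric_characters.conjugate_transform (ZNd N d) (character N d) f"
proof -
  interpret ZN: symmetric_characters "ZNd N d" "addN N" "character N d"
    using assms by (rule ZNd_symmetric_characters)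
  have "cnj (character N d x m) = cis (- 2 * pi * real (dotN d m x) / real N)" for x m
    by (simp add: character_def cis_cnj dotN_commute)
  then show ?thesis
    by (simp add: fun_eq_iff dft_def ZN.conjugate_transform_def card_ZNd
        real_sqrt_power mult.commute)
qed

lemma energy_eq_card_additive_quadruples: "energy N A = card (additive_quadruples (addN N) A)"
  by (simp add: energy_def additive_quadruples_def)

theorem mainTheorem1:
  fixes N d :: nat and f :: "(nat \<Rightarrow> nat) \<Rightarrow> complex"
  assumes "N \<ge> 2" and "d \<ge> 1"
    and "\<exists>x\<in>ZNd N d. f x \<noteq> 0"
  defines "E \<equiv> suppN N d f" and "\<Sigma> \<equiv> suppN N d (dft N d f)"
  shows "(real N ^ d \<le> real (card E) * root 3
           (real (energy N \<Sigma>) - real (card \<Sigma>) ^ 2 * (1 - real N ^ d / (real (card E) * real (card \<Sigma>)))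
            - real (card \<Sigma>) * (real (card \<Sigma>) - 1) *
              (1 - sqrt (real N ^ d / (real (card E) * real (card \<Sigma>))) * sqrt (real (energy N E) / real (card E) ^ 3)))) \<and>
          (real N ^ d \<le> real (card \<Sigma>) * root 3
           (real (energy N E) - real (card E) ^ 2 * (1 - real N ^ d / (real (card E) * real (card \<Sigma>)))
            - real (card E) * (real (card E) - 1) *
              (1 - sqrt (real N ^ d / (real (card E) * real (card \<Sigma>))) * sqrt (real (energy N \<Sigma>) / real (card \<Sigma>) ^ 3))))"
proof -
  interpret ZN: symmetric_characters "ZNd N d" "addN N" "character N d"
    using assms(1) by (intro ZNd_symmetric_characters) simp
  interpret dual: symmetric_characters "ZNd N d" "addN N" "\<lambda>a x. cnj (character N d a x)"
    by (rule ZN.conjugate_characters)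
  have dft: "dft N d f = ZN.conjugate_transform f"
    using assms(1) by (intro dft_conjugate_transform) simp
  have E: "E = ZN.supp (ZN.transform (dft N d f))" and E': "E = dual.supp f"
    by (auto simp: E_def suppN_def dft ZN.transform_conjugate_transform)
  have \<Sigma>: "\<Sigma> = ZN.supp (dft N d f)" and \<Sigma>': "\<Sigma> = dual.supp (dual.transform f)"
    by (simp_all add: \<Sigma>_def suppN_def dft ZN.conjugate_characters_transforms)
  have "E \<noteq> {}"
    using assms(3) by (auto simp: E')
  then have "N ^ d \<le> card E * card \<Sigma>"
    using dual.uncertainty_principle[of f] by (simp add: E' \<Sigma>' card_ZNd)
  then have "\<Sigma> \<noteq> {}"
    using assms(1) by auto
  show ?thesis
    using ZN.energy_uncertainty_principle[of "dft N d f", folded \<Sigma> E, OF \<open>\<Sigma> \<noteq> {}\<close>]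
      dual.energy_uncertainty_principle[of f, folded \<Sigma>' E', OF \<open>E \<noteq> {}\<close>]
    by (simp add: card_ZNd energy_eq_card_additive_quadruples mult.commute[of "real (card \<Sigma>)"])
qed

end
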